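(* Let $(Y_i)_{i\ge1}$ be i.i.d. random variables taking non-negative integer values, and suppose $\mathbb{E}[Y_i^c]\le1$ for some constant $c\ge0$. Let $M=\sup_{j\ge0}\prod_{1\le i\le j}Y_i$ (the empty product being $1$). Then for every $A>0$, \[ \mathbb{P}[M\ge A]\le A^{-c}. \] *)

theory Defs
  imports "HOL-Probability.Probability"
begin

text \<open>Supremum of the partial products (empty product = 1), valued in ennreal since it may be infinite.\<close>
definition sup_prod :: "(nat \<Rightarrow> 'a \<Rightarrow> nat) \<Rightarrow> 'a \<Rightarrow> ennreal" where
  "sup_prod Y x = (SUP j. ennreal (\<Prod>i\<in>{1..j}. real (Y i x)))"

end

theory Submission
  imports Defs
begin

text \<open>
  Stop the partial products \<open>P\<^sub>j = Y\<^sub>1 \<cdots> Y\<^sub>j\<close> at the first time they reach \<open>A\<close>.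
  Because \<open>Y\<^sub>n\<^sub>+\<^sub>1\<close> is independent of \<open>Y\<^sub>1, \<dots>, Y\<^sub>n\<close> and \<open>E[Y\<^sup>c] \<le> 1\<close>, the
  \<open>c\<close>-th power of the stopped product is a nonnegative supermartingale started at \<open>1\<close>, so its
  expectation stays at most \<open>1\<close>. Markov's inequality bounds the probability that some
  \<open>P\<^sub>j\<close> with \<open>j \<le> n\<close> reaches \<open>A\<close> by \<open>A\<^sup>-\<^sup>c\<close>, and continuity from below lets \<open>n \<rightarrow> \<infinity>\<close>.
  Since the \<open>P\<^sub>j\<close> are integers, their supremum reaches \<open>A\<close> only if some \<open>P\<^sub>j\<close> does.
\<close>

lemma (in prob_space) indep_var_nn_integral:
  fixes X1 X2 :: "'a \<Rightarrow> ennreal"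
  assumes "indep_var borel X1 borel X2"
  shows "(\<integral>\<^sup>+\<omega>. X1 \<omega> * X2 \<omega> \<partial>M) = (\<integral>\<^sup>+\<omega>. X1 \<omega> \<partial>M) * (\<integral>\<^sup>+\<omega>. X2 \<omega> \<partial>M)"
proof -
  have borel: "(\<lambda>_. borel) = case_bool borel borel"
    by (simp add: fun_eq_iff split: bool.split)
  have "indep_vars (\<lambda>_. borel) (case_bool X1 X2) UNIV"
    using assms unfolding indep_var_def by (simp only: borel)
  from indep_vars_nn_integral[OF _ this] show ?thesis
    by (simp add: UNIV_bool mult.commute)
qed

lemma nn_integral_comp_eq_if_distr_eq:
  assumes "X \<in> measurable M N" "X' \<in> measurable M N" "distr M N X = distr M N X'"
    and "f \<in> borel_measurable N"
  shows "(\<integral>\<^sup>+x. f (X x) \<partial>M) = (\<integral>\<^sup>+x. f (X' x) \<partial>M)"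
  using assms nn_integral_distr[of X M N f] nn_integral_distr[of X' M N f] by simp

fun stopped_prod :: "real \<Rightarrow> nat \<Rightarrow> (nat \<Rightarrow> real) \<Rightarrow> real" where
  "stopped_prod A 0 y = 1"
| "stopped_prod A (Suc n) y =
     (if A \<le> stopped_prod A n y then stopped_prod A n y else stopped_prod A n y * y (Suc n))"

lemma stopped_prod_eq_prod_if_less:
  "stopped_prod A n y < A \<Longrightarrow> stopped_prod A n y = (\<Prod>i\<in>{1..n}. y i)"
  by (induction n) (auto split: if_splits)

lemma stopped_prod_ge_if_prod_ge:
  "j \<le> n \<Longrightarrow> A \<le> (\<Prod>i\<in>{1..j}. y i) \<Longrightarrow> A \<le> stopped_prod A n y"
proof (induction n)
  case (Suc n)
  show ?case
  proof (cases "j = Suc n \<and> stopped_prod A n y < A")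
    case True
    then show ?thesis
      using Suc.prems stopped_prod_eq_prod_if_less[of A n y] by simp
  qed (use Suc in \<open>auto simp: le_Suc_eq\<close>)
qed simp

lemma stopped_prod_nonneg:
  "(\<And>i. i \<in> {1..n} \<Longrightarrow> 0 \<le> y i) \<Longrightarrow> 0 \<le> stopped_prod A n y"
  by (induction n) auto

lemma stopped_prod_restrict:
  "{1..n} \<subseteq> I \<Longrightarrow> stopped_prod A n (restrict y I) = stopped_prod A n y"
  by (induction n) (auto simp: atLeastAtMostSuc_conv)

lemma measurable_stopped_prod:
  "m \<le> n \<Longrightarrow> (\<lambda>y. stopped_prod A m y) \<in> borel_measurable (Pi\<^sub>M {1..n} (\<lambda>_. borel))"
proof (induction m)
  case 0
  have "(\<lambda>y. stopped_prod A 0 y) = (\<lambda>_. 1)"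
    by simp
  then show ?case
    by simp
next
  case (Suc m)
  then have [measurable]:
    "(\<lambda>y. stopped_prod A m y) \<in> borel_measurable (Pi\<^sub>M {1..n} (\<lambda>_. borel))"
    "(\<lambda>y. y (Suc m)) \<in> borel_measurable (Pi\<^sub>M {1..n} (\<lambda>_. borel))"
    by (auto intro: measurable_component_singleton)
  show ?case
    unfolding stopped_prod.simps by measurable
qed

lemma borel_measurable_stopped_prod:
  assumes "\<And>i. i \<in> {1..n} \<Longrightarrow> Y i \<in> borel_measurable M"
  shows "(\<lambda>x. stopped_prod A n (\<lambda>i. Y i x)) \<in> borel_measurable M"
proof -
  have [measurable]: "(\<lambda>y. stopped_prod A n y) \<in> borel_measurable (Pi\<^sub>M {1..n} (\<lambda>_. borel))"
    by (rule measurable_stopped_prod) simp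
  have "(\<lambda>x. stopped_prod A n (restrict (\<lambda>i. Y i x) {1..n})) \<in> borel_measurable M"
    using assms by measurable
  then show ?thesis
    by (simp add: stopped_prod_restrict)
qed

context prob_space
begin

lemma indep_var_stopped_prod_next:
  fixes Y :: "nat \<Rightarrow> 'a \<Rightarrow> real" and g h :: "real \<Rightarrow> 'b::topological_space"
  assumes indep: "indep_vars (\<lambda>_. borel) Y {1..}"
    and [measurable]: "g \<in> borel_measurable borel" "h \<in> borel_measurable borel"
  shows "indep_var borel (\<lambda>x. g (stopped_prod A n (\<lambda>i. Y i x))) borel (\<lambda>x. h (Y (Suc n) x))"
proof -
  have [measurable]: "(\<lambda>y. stopped_prod A n y) \<in> borel_measurable (Pi\<^sub>M {1..n} (\<lambda>_. borel))"
    by (rule measurable_stopped_prod) simp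
  have [measurable]: "(\<lambda>y. y (Suc n)) \<in> borel_measurable (Pi\<^sub>M {Suc n} (\<lambda>_. borel))"
    by (rule measurable_component_singleton) simp
  have "indep_var borel ((\<lambda>y. g (stopped_prod A n y)) \<circ> (\<lambda>x. restrict (\<lambda>i. Y i x) {1..n}))
      borel ((\<lambda>y. h (y (Suc n))) \<circ> (\<lambda>x. restrict (\<lambda>i. Y i x) {Suc n}))"
  proof (rule indep_var_compose[OF indep_var_restrict[OF indep]])
    show "(\<lambda>y. g (stopped_prod A n y)) \<in> borel_measurable (Pi\<^sub>M {1..n} (\<lambda>_. borel))"
      by measurable
    show "(\<lambda>y. h (y (Suc n))) \<in> borel_measurable (Pi\<^sub>M {Suc n} (\<lambda>_. borel))"
      by measurable
  qed auto
  then show ?thesis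
    unfolding comp_def stopped_prod_restrict[OF order_refl] by simp
qed

lemma nn_integral_stopped_prod_powr_le_1:
  fixes Y :: "nat \<Rightarrow> 'a \<Rightarrow> real"
  assumes indep: "indep_vars (\<lambda>_. borel) Y {1..}"
    and nonneg: "\<And>i x. i \<ge> 1 \<Longrightarrow> x \<in> space M \<Longrightarrow> 0 \<le> Y i x"
    and moment: "\<And>i. i \<ge> 1 \<Longrightarrow> (\<integral>\<^sup>+x. ennreal (Y i x powr c) \<partial>M) \<le> 1"
  shows "(\<integral>\<^sup>+x. ennreal (stopped_prod A n (\<lambda>i. Y i x) powr c) \<partial>M) \<le> 1"
proof (induction n)
  case 0
  then show ?case
    by (simp add: emeasure_space_1)
next
  case (Suc n)
  let ?Q = "\<lambda>x. stopped_prod A n (\<lambda>i. Y i x)"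
  define stopped where "stopped x = (if A \<le> ?Q x then ennreal (?Q x powr c) else 0)" for x
  define running where "running x = (if A \<le> ?Q x then 0 else ennreal (?Q x powr c))" for x
  define factor where "factor x = ennreal (Y (Suc n) x powr c)" for x
  have [measurable]: "Y i \<in> borel_measurable M" if "i \<ge> 1" for i
    using indep that by (auto simp: indep_vars_def)
  have [measurable]: "?Q \<in> borel_measurable M"
    by (rule borel_measurable_stopped_prod) simp
  have [measurable]: "stopped \<in> borel_measurable M" "running \<in> borel_measurable M"
      "factor \<in> borel_measurable M"
    unfolding stopped_def running_def factor_def by measurable
  have indep_step: "indep_var borel running borel factor"
    using indep_var_stopped_prod_next[OF indep,
        of "\<lambda>q. if A \<le> q then 0 else ennreal (q powr c)" "\<lambda>t. ennreal (t powr c)"]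
    unfolding running_def factor_def by simp
  have split: "ennreal (stopped_prod A (Suc n) (\<lambda>i. Y i x) powr c) = stopped x + running x * factor x"
    if "x \<in> space M" for x
  proof -
    have "0 \<le> ?Q x" "0 \<le> Y (Suc n) x"
      using nonneg that by (auto intro: stopped_prod_nonneg)
    then show ?thesis
      by (simp add: stopped_def running_def factor_def powr_mult ennreal_mult)
  qed
  have "(\<integral>\<^sup>+x. ennreal (stopped_prod A (Suc n) (\<lambda>i. Y i x) powr c) \<partial>M)
      = (\<integral>\<^sup>+x. stopped x + running x * factor x \<partial>M)"
    by (rule nn_integral_cong) (rule split)
  also have "\<dots> = (\<integral>\<^sup>+x. stopped x \<partial>M) + (\<integral>\<^sup>+x. running x * factor x \<partial>M)"
    by (rule nn_integral_add) auto
  also have "(\<integral>\<^sup>+x. running x * factor x \<partial>M) = (\<integral>\<^sup>+x. running x \<partial>M) * (\<integral>\<^sup>+x. factor x \<partial>M)"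
    by (rule indep_var_nn_integral[OF indep_step])
  also have "\<dots> \<le> (\<integral>\<^sup>+x. running x \<partial>M)"
    using mult_left_mono[OF moment[of "Suc n"], of "\<integral>\<^sup>+x. running x \<partial>M"]
    by (simp add: factor_def)
  also have "(\<integral>\<^sup>+x. stopped x \<partial>M) + (\<integral>\<^sup>+x. running x \<partial>M) = (\<integral>\<^sup>+x. ennreal (?Q x powr c) \<partial>M)"
    by (simp add: nn_integral_add[symmetric] stopped_def running_def if_distrib cong: if_cong)
  finally show ?case
    using Suc.IH by (simp add: add_left_mono order_trans)
qed

lemma prob_max_partial_prod_ge_le:
  fixes Y :: "nat \<Rightarrow> 'a \<Rightarrow> real"
  assumes indep: "indep_vars (\<lambda>_. borel) Y {1..}"
    and nonneg: "\<And>i x. i \<ge> 1 \<Longrightarrow> x \<in> space M \<Longrightarrow> 0 \<le> Y i x"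
    and moment: "\<And>i. i \<ge> 1 \<Longrightarrow> (\<integral>\<^sup>+x. ennreal (Y i x powr c) \<partial>M) \<le> 1"
    and "0 \<le> c" "0 < A"
  shows "prob {x \<in> space M. \<exists>j\<le>n. A \<le> (\<Prod>i\<in>{1..j}. Y i x)} \<le> A powr -c"
proof -
  let ?Q = "\<lambda>x. stopped_prod A n (\<lambda>i. Y i x)"
  define S where "S = {x \<in> space M. A \<le> ?Q x}"
  have [measurable]: "?Q \<in> borel_measurable M"
    using indep by (intro borel_measurable_stopped_prod) (auto simp: indep_vars_def)
  then have S_sets [measurable]: "S \<in> sets M"
    unfolding S_def by measurable
  have "ennreal (A powr c) * emeasure M S = (\<integral>\<^sup>+x. ennreal (A powr c) * indicator S x \<partial>M)"
    by (simp add: nn_integral_cmult_indicator)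
  also have "\<dots> \<le> (\<integral>\<^sup>+x. ennreal (?Q x powr c) \<partial>M)"
    using \<open>0 < A\<close> \<open>0 \<le> c\<close>
    by (intro nn_integral_mono) (auto simp: S_def indicator_def intro!: ennreal_leI powr_mono2)
  also have "\<dots> \<le> 1"
    by (rule nn_integral_stopped_prod_powr_le_1[OF indep nonneg moment])
  finally have "A powr c * prob S \<le> 1"
    by (simp add: emeasure_eq_measure flip: ennreal_mult)
  then have "prob S \<le> A powr -c"
    using \<open>0 < A\<close> by (simp add: powr_minus_divide field_simps)
  moreover have "prob {x \<in> space M. \<exists>j\<le>n. A \<le> (\<Prod>i\<in>{1..j}. Y i x)} \<le> prob S"
    using stopped_prod_ge_if_prod_ge by (intro finite_measure_mono) (auto simp: S_def)
  ultimately show ?thesis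
    by linarith
qed

lemma prob_sup_partial_prod_ge_le:
  fixes Y :: "nat \<Rightarrow> 'a \<Rightarrow> real"
  assumes indep: "indep_vars (\<lambda>_. borel) Y {1..}"
    and nonneg: "\<And>i x. i \<ge> 1 \<Longrightarrow> x \<in> space M \<Longrightarrow> 0 \<le> Y i x"
    and moment: "\<And>i. i \<ge> 1 \<Longrightarrow> (\<integral>\<^sup>+x. ennreal (Y i x powr c) \<partial>M) \<le> 1"
    and "0 \<le> c" "0 < A"
  shows "prob {x \<in> space M. \<exists>j. A \<le> (\<Prod>i\<in>{1..j}. Y i x)} \<le> A powr -c"
proof -
  define E where "E n = {x \<in> space M. \<exists>j\<le>n. A \<le> (\<Prod>i\<in>{1..j}. Y i x)}" for n
  have [measurable]: "Y i \<in> borel_measurable M" if "i \<ge> 1" for i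
    using indep that by (auto simp: indep_vars_def)
  have "E n \<in> sets M" for n
    unfolding E_def by measurable
  then have "range E \<subseteq> sets M"
    by blast
  moreover have "incseq E"
    unfolding incseq_def E_def by (auto intro: order_trans)
  ultimately have "(\<lambda>n. prob (E n)) \<longlonglongrightarrow> prob (\<Union>n. E n)"
    by (rule finite_Lim_measure_incseq)
  moreover have "prob (E n) \<le> A powr -c" for n
    unfolding E_def by (rule prob_max_partial_prod_ge_le) fact+
  ultimately have "prob (\<Union>n. E n) \<le> A powr -c"
    by (intro LIMSEQ_le_const2) auto
  moreover have "(\<Union>n. E n) = {x \<in> space M. \<exists>j. A \<le> (\<Prod>i\<in>{1..j}. Y i x)}"
    by (auto simp: E_def)
  ultimately show ?thesis
    by simp
qed

end

lemma ennreal_le_sup_prod_iff: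
  "ennreal A \<le> sup_prod Y x \<longleftrightarrow> (\<exists>j. A \<le> (\<Prod>i\<in>{1..j}. real (Y i x)))"
proof
  define k where "k j = (\<Prod>i\<in>{1..j}. Y i x)" for j
  have prod_eq: "(\<Prod>i\<in>{1..j}. real (Y i x)) = real (k j)" for j
    by (simp add: k_def)
  assume le: "ennreal A \<le> sup_prod Y x"
  show "\<exists>j. A \<le> (\<Prod>i\<in>{1..j}. real (Y i x))"
  proof (rule ccontr)
    assume "\<nexists>j. A \<le> (\<Prod>i\<in>{1..j}. real (Y i x))"
    then have less: "real (k j) < A" for j
      using prod_eq by (metis not_le)
    have "int (k j) \<le> \<lceil>A\<rceil> - 1" for j
      using less[of j] by (simp add: less_ceiling_iff)
    then have "real (k j) \<le> of_int (\<lceil>A\<rceil> - 1)" for j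
      by (metis of_int_le_iff of_int_of_nat_eq)
    then have "sup_prod Y x \<le> ennreal (of_int (\<lceil>A\<rceil> - 1))"
      unfolding sup_prod_def prod_eq by (intro SUP_least ennreal_leI)
    also have "\<dots> < ennreal A"
      using less[of 0] ceiling_correct[of A] by (intro ennreal_lessI) (auto simp: k_def)
    finally show False
      using le by simp
  qed
next
  assume "\<exists>j. A \<le> (\<Prod>i\<in>{1..j}. real (Y i x))"
  then obtain j where "A \<le> (\<Prod>i\<in>{1..j}. real (Y i x))" ..
  then have "ennreal A \<le> ennreal (\<Prod>i\<in>{1..j}. real (Y i x))"
    by (rule ennreal_leI)
  also have "\<dots> \<le> sup_prod Y x"
    unfolding sup_prod_def by (rule SUP_upper) simp
  finally show "ennreal A \<le> sup_prod Y x" .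
qed

theorem lemma4p1:
  fixes M :: "'a measure" and Y :: "nat \<Rightarrow> 'a \<Rightarrow> nat" and c A :: real
  assumes "prob_space M"
    and meas: "\<And>i. i \<ge> 1 \<Longrightarrow> Y i \<in> measurable M (count_space UNIV)"
    and indep: "prob_space.indep_vars M (\<lambda>_. count_space UNIV) Y {1..}"
    and ident: "\<And>i. i \<ge> 1 \<Longrightarrow> distr M (count_space UNIV) (Y i) = distr M (count_space UNIV) (Y 1)"
    and "c \<ge> 0"
    and moment: "(\<integral>\<^sup>+ x. ennreal (if c = 0 then 1 else real (Y 1 x) powr c) \<partial>M) \<le> 1"
    and "A > 0"
  shows "measure M {x \<in> space M. sup_prod Y x \<ge> ennreal A} \<le> A powr (- c)"
proof -
  interpret prob_space M by fact
  show ?thesis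
  proof (cases "c = 0")
    case True
    then show ?thesis
      using \<open>A > 0\<close> prob_le_1 by simp
  next
    case False
    have indep_real: "indep_vars (\<lambda>_. borel) (\<lambda>i x. real (Y i x)) {1..}"
      using indep by (rule indep_vars_compose2) simp
    have "(\<integral>\<^sup>+x. ennreal (real (Y i x) powr c) \<partial>M) \<le> 1" if "i \<ge> 1" for i
      using moment False nn_integral_comp_eq_if_distr_eq[OF meas[OF that] meas ident[OF that],
          of "\<lambda>k. ennreal (real k powr c)"]
      by simp
    then have "prob {x \<in> space M. \<exists>j. A \<le> (\<Prod>i\<in>{1..j}. real (Y i x))} \<le> A powr -c"
      using \<open>c \<ge> 0\<close> \<open>A > 0\<close> by (intro prob_sup_partial_prod_ge_le[OF indep_real]) auto
    then show ?thesis
      by (simp add: ennreal_le_sup_prod_iff)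
  qed
qed

end
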